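(* Let $G=(V,E)$ be a finite simple graph with nonempty vertex set and burning number $b(G)$. Consider the following procedure (Algorithm 1), which receives $G$ and $b(G)$ as input. Choose $s_1\in V$ arbitrarily. For $i=2,\dots,b(G)$, let $s_i$ be any vertex $u\in V$ maximizing $d(u,\{s_1,\dots,s_{i-1}\})$ (ties broken arbitrarily). For $i=b(G)+1,\dots,3b(G)-2$, let $s_i$ be an arbitrary vertex of $V$. Then, for every choice made by this procedure, the sequence $(s_1,\dots,s_k)$ with $k=3b(G)-2$ is a burning sequence of $G$, i.e. $\bigcup_{i=1}^{k} N_{k-i}[s_i]=V$. Consequently its length $3b(G)-2$ is at most $3-2/b(G)$ times the burning number, i.e. Algorithm 1 is a $(3-2/b(G))$-approximation algorithm for the graph burning problem.
   Context: For vertices $u,v$ of $G$, $d(u,v)$ is the number of edges on a shortest $u$–$v$ path ($+\infty$ if none exists), and for $S\subseteq V$, $d(u,S)=\min_{w\in S}d(u,w)$. For $v\in V$ and an integer $r\ge 0$, $N_r[v]=\{u\in V: d(u,v)\le r\}$ is the closed $r$-th neighborhood of $v$ (so $N_0[v]=\{v\}$). A burning sequence of length $k$ is a sequence $(s_1,\dots,s_k)$ of vertices of $G$ (repetitions allowed) such that $\bigcup_{i=1}^{k}N_{k-i}[s_i]=V$. The burning number $b(G)$ is the minimum length of a burning sequence of $G$. *)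

theory Defs
  imports Main "HOL-Library.Extended_Nat"
begin

definition simple_graph :: "'a set \<Rightarrow> ('a \<Rightarrow> 'a \<Rightarrow> bool) \<Rightarrow> bool" where
  "simple_graph V E \<longleftrightarrow> finite V \<and> (\<forall>x y. E x y \<longrightarrow> x \<in> V \<and> y \<in> V)
     \<and> (\<forall>x y. E x y \<longrightarrow> E y x) \<and> (\<forall>x. \<not> E x x)"

definition walk_len :: "'a set \<Rightarrow> ('a \<Rightarrow> 'a \<Rightarrow> bool) \<Rightarrow> 'a \<Rightarrow> 'a \<Rightarrow> nat \<Rightarrow> bool" where
  "walk_len V E u v n \<longleftrightarrow> (\<exists>xs. length xs = Suc n \<and> hd xs = u \<and> last xs = v
      \<and> set xs \<subseteq> V \<and> (\<forall>i<n. E (xs ! i) (xs ! Suc i)))"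

definition gdist :: "'a set \<Rightarrow> ('a \<Rightarrow> 'a \<Rightarrow> bool) \<Rightarrow> 'a \<Rightarrow> 'a \<Rightarrow> enat" where
  "gdist V E u v = (if \<exists>n. walk_len V E u v n then enat (LEAST n. walk_len V E u v n) else \<infinity>)"

definition gdist_set :: "'a set \<Rightarrow> ('a \<Rightarrow> 'a \<Rightarrow> bool) \<Rightarrow> 'a \<Rightarrow> 'a set \<Rightarrow> enat" where
  "gdist_set V E u S = (INF w\<in>S. gdist V E u w)"

definition closed_nbhd :: "'a set \<Rightarrow> ('a \<Rightarrow> 'a \<Rightarrow> bool) \<Rightarrow> nat \<Rightarrow> 'a \<Rightarrow> 'a set" where
  "closed_nbhd V E r v = {u \<in> V. gdist V E u v \<le> enat r}"

text \<open>Burning sequence (s_1,...,s_k), here 0-indexed list ss: s_{i+1} = ss!i has radius k-(i+1).\<close>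
definition burning_seq :: "'a set \<Rightarrow> ('a \<Rightarrow> 'a \<Rightarrow> bool) \<Rightarrow> 'a list \<Rightarrow> bool" where
  "burning_seq V E ss \<longleftrightarrow> set ss \<subseteq> V \<and>
     (\<Union>i<length ss. closed_nbhd V E (length ss - Suc i) (ss ! i)) = V"

definition burning_number :: "'a set \<Rightarrow> ('a \<Rightarrow> 'a \<Rightarrow> bool) \<Rightarrow> nat" where
  "burning_number V E = (LEAST k. \<exists>ss. length ss = k \<and> burning_seq V E ss)"

end

theory Submission
  imports Defs
begin

text \<open>Let \<open>b = b(G)\<close> and \<open>S = {s\<^sub>1, \<dots>, s\<^sub>b}\<close>. A burning sequence of length \<open>b\<close> covers
  \<open>V\<close> by \<open>b\<close> balls of radius at most \<open>b - 1\<close>, so by pigeonhole no \<open>b + 1\<close> vertices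
  can be pairwise at distance more than \<open>2b - 2\<close>. If some vertex \<open>v\<close> had
  \<open>d(v, S) > 2b - 2\<close>, the greedy choice would make \<open>s\<^sub>1, \<dots>, s\<^sub>b, v\<close> such a
  configuration, since \<open>d(s\<^sub>j, s\<^sub>i) \<ge> d(s\<^sub>j, {s\<^sub>1, \<dots>, s\<^sub>j\<^sub>-\<^sub>1}) \<ge> d(v, S)\<close> for \<open>i < j\<close>.
  Hence every vertex is within \<open>2b - 2\<close> of \<open>S\<close>, and in a sequence of length
  \<open>3b - 2\<close> the first \<open>b\<close> vertices burn with radius at least \<open>2b - 2\<close>.\<close>

lemma walk_len_0_iff: "walk_len V E u v 0 \<longleftrightarrow> u = v \<and> u \<in> V"
proof
  assume "walk_len V E u v 0"
  then obtain xs where "length xs = 1" "hd xs = u" "last xs = v" "set xs \<subseteq> V"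
    unfolding walk_len_def by auto
  then show "u = v \<and> u \<in> V" by (cases xs) auto
next
  assume "u = v \<and> u \<in> V"
  then show "walk_len V E u v 0" unfolding walk_len_def by (intro exI[of _ "[u]"]) auto
qed

lemma walk_len_Suc_iff:
  assumes "simple_graph V E"
  shows "walk_len V E u v (Suc n) \<longleftrightarrow> (\<exists>w. E u w \<and> walk_len V E w v n)"
proof
  assume "walk_len V E u v (Suc n)"
  then obtain xs where xs: "length xs = Suc (Suc n)" "hd xs = u" "last xs = v" "set xs \<subseteq> V"
    "\<forall>i<Suc n. E (xs ! i) (xs ! Suc i)"
    unfolding walk_len_def by blast
  then obtain ys where xs_eq: "xs = u # ys" by (cases xs) auto
  have "E u (ys ! 0)" using xs(5) xs_eq by force
  moreover have "walk_len V E (ys ! 0) v n"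
    unfolding walk_len_def
  proof (intro exI[of _ ys] conjI allI impI)
    show "length ys = Suc n" using xs(1) xs_eq by simp
    then show "hd ys = ys ! 0" "last ys = v" using xs(3) xs_eq by (cases ys; simp)+
    show "set ys \<subseteq> V" using xs(4) xs_eq by auto
    show "E (ys ! i) (ys ! Suc i)" if "i < n" for i
      using xs(5) xs_eq that by (metis Suc_mono nth_Cons_Suc)
  qed
  ultimately show "\<exists>w. E u w \<and> walk_len V E w v n" by blast
next
  assume "\<exists>w. E u w \<and> walk_len V E w v n"
  then obtain w ys where e: "E u w" and ys: "length ys = Suc n" "hd ys = w" "last ys = v"
    "set ys \<subseteq> V" "\<forall>i<n. E (ys ! i) (ys ! Suc i)"
    unfolding walk_len_def by blast
  have "u \<in> V" using assms e unfolding simple_graph_def by blast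
  show "walk_len V E u v (Suc n)"
    unfolding walk_len_def
  proof (intro exI[of _ "u # ys"] conjI allI impI)
    show "length (u # ys) = Suc (Suc n)" "hd (u # ys) = u" "last (u # ys) = v"
      "set (u # ys) \<subseteq> V" using ys \<open>u \<in> V\<close> by auto
    show "E ((u # ys) ! i) ((u # ys) ! Suc i)" if "i < Suc n" for i
      using e ys that by (cases i; cases ys) auto
  qed
qed

lemma walk_len_trans:
  assumes "simple_graph V E" "walk_len V E u v m" "walk_len V E v w n"
  shows "walk_len V E u w (m + n)"
  using assms(2)
proof (induction m arbitrary: u)
  case 0
  then have "u = v" using walk_len_0_iff by metis
  with assms(3) show ?case by simp
next
  case (Suc m)
  then show ?case using walk_len_Suc_iff[OF assms(1)] by auto
qed

lemma walk_len_sym: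
  assumes "simple_graph V E" "walk_len V E u v n"
  shows "walk_len V E v u n"
  using assms(2)
proof (induction n arbitrary: u)
  case 0
  then show ?case using walk_len_0_iff by metis
next
  case (Suc n)
  then obtain w where "E u w" and "walk_len V E w v n"
    using walk_len_Suc_iff[OF assms(1)] by blast
  moreover have "walk_len V E w u 1"
    using \<open>E u w\<close> assms(1) walk_len_Suc_iff[OF assms(1)] walk_len_0_iff
    unfolding simple_graph_def by (metis One_nat_def)
  ultimately show ?case using Suc.IH walk_len_trans[OF assms(1)] by fastforce
qed

lemma gdist_le_enat_iff: "gdist V E u v \<le> enat n \<longleftrightarrow> (\<exists>m\<le>n. walk_len V E u v m)"
proof
  assume le: "gdist V E u v \<le> enat n"
  then have ex: "\<exists>m. walk_len V E u v m" unfolding gdist_def by (auto split: if_splits)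
  then have "gdist V E u v = enat (LEAST m. walk_len V E u v m)" unfolding gdist_def by simp
  then show "\<exists>m\<le>n. walk_len V E u v m" using le LeastI_ex[OF ex] by auto
next
  assume "\<exists>m\<le>n. walk_len V E u v m"
  then show "gdist V E u v \<le> enat n" unfolding gdist_def
    by (auto intro: Least_le order_trans)
qed

lemma gdist_self:
  assumes "u \<in> V"
  shows "gdist V E u u = 0"
proof -
  have "gdist V E u u \<le> enat 0"
    using assms gdist_le_enat_iff[of V E u u 0] walk_len_0_iff[of V E u u] by auto
  then show ?thesis by (simp flip: zero_enat_def)
qed

lemma gdist_commute:
  assumes "simple_graph V E"
  shows "gdist V E u v = gdist V E v u"
proof -
  have "walk_len V E u v = walk_len V E v u"
    using walk_len_sym[OF assms] by blast
  then show ?thesis unfolding gdist_def by simp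
qed

lemma gdist_triangle:
  assumes "simple_graph V E"
  shows "gdist V E u w \<le> gdist V E u v + gdist V E v w"
proof (cases "gdist V E u v" ; cases "gdist V E v w")
  fix m n assume "gdist V E u v = enat m" "gdist V E v w = enat n"
  then obtain m' n' where "m' \<le> m" "walk_len V E u v m'" "n' \<le> n" "walk_len V E v w n'"
    using gdist_le_enat_iff by (metis order_refl)
  then have "gdist V E u w \<le> enat (m + n)"
    using gdist_le_enat_iff walk_len_trans[OF assms] by (metis add_mono)
  then show ?thesis using \<open>gdist V E u v = enat m\<close> \<open>gdist V E v w = enat n\<close> by simp
qed auto

lemma gdist_set_attained:
  assumes "finite S" "S \<noteq> {}"
  shows "\<exists>w\<in>S. gdist_set V E u S = gdist V E u w"
proof -
  have "gdist_set V E u S = Min (gdist V E u ` S)"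
    unfolding gdist_set_def using assms by (simp add: Min_Inf)
  moreover have "Min (gdist V E u ` S) \<in> gdist V E u ` S"
    using assms by (intro Min_in) auto
  ultimately show ?thesis by (metis imageE)
qed

lemma burning_seq_Nil_iff: "burning_seq V E [] \<longleftrightarrow> V = {}"
  unfolding burning_seq_def by auto

lemma burning_seq_if_prefix_close:
  assumes "set ss \<subseteq> V" "n \<le> length ss"
    and "\<And>v. v \<in> V \<Longrightarrow> \<exists>j<n. gdist V E v (ss ! j) \<le> enat (length ss - n)"
  shows "burning_seq V E ss"
  unfolding burning_seq_def
proof (intro conjI equalityI subsetI)
  fix v assume "v \<in> V"
  then obtain j where "j < n" and close: "gdist V E v (ss ! j) \<le> enat (length ss - n)"
    using assms(3) by blast
  have "gdist V E v (ss ! j) \<le> enat (length ss - Suc j)"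
    by (rule order_trans[OF close]) (use \<open>j < n\<close> in simp)
  then show "v \<in> (\<Union>i<length ss. closed_nbhd V E (length ss - Suc i) (ss ! i))"
    unfolding closed_nbhd_def using \<open>v \<in> V\<close> \<open>j < n\<close> assms(2) by (auto intro!: bexI[of _ j])
qed (use assms(1) in \<open>auto simp: closed_nbhd_def\<close>)

lemma burning_number_attained:
  assumes "finite V"
  shows "\<exists>ts. length ts = burning_number V E \<and> burning_seq V E ts"
proof -
  obtain xs where "set xs = V" using finite_list[OF assms] by blast
  have "burning_seq V E xs"
  proof (rule burning_seq_if_prefix_close[where n = "length xs"])
    fix v assume "v \<in> V"
    then obtain j where "j < length xs" "xs ! j = v"
      using \<open>set xs = V\<close> by (auto simp: in_set_conv_nth)
    then show "\<exists>j<length xs. gdist V E v (xs ! j) \<le> enat (length xs - length xs)"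
      using gdist_self[OF \<open>v \<in> V\<close>] by (auto simp flip: zero_enat_def)
  qed (use \<open>set xs = V\<close> in auto)
  then show ?thesis
    unfolding burning_number_def
    using LeastI_ex[of "\<lambda>k. \<exists>ts. length ts = k \<and> burning_seq V E ts"] by blast
qed

definition far_apart :: "'a set \<Rightarrow> ('a \<Rightarrow> 'a \<Rightarrow> bool) \<Rightarrow> nat \<Rightarrow> 'a list \<Rightarrow> bool" where
  "far_apart V E r xs \<longleftrightarrow> (\<forall>j<length xs. \<forall>i<j. enat r < gdist V E (xs ! i) (xs ! j))"

lemma far_apart_length_le_burning_seq:
  assumes "simple_graph V E" "burning_seq V E ts" "set xs \<subseteq> V"
    and "far_apart V E (2 * (length ts - 1)) xs"
  shows "length xs \<le> length ts"
proof -
  have "\<exists>i<length ts. gdist V E (xs ! j) (ts ! i) \<le> enat (length ts - Suc i)"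
    if "j < length xs" for j
  proof -
    have "xs ! j \<in> V" using assms(3) that by auto
    then have "xs ! j \<in> (\<Union>i<length ts. closed_nbhd V E (length ts - Suc i) (ts ! i))"
      using assms(2) unfolding burning_seq_def by simp
    then show ?thesis unfolding closed_nbhd_def by auto
  qed
  then obtain f where f: "\<And>j. j < length xs \<Longrightarrow>
      f j < length ts \<and> gdist V E (xs ! j) (ts ! f j) \<le> enat (length ts - Suc (f j))"
    by metis
  have same_ball_close: "gdist V E (xs ! i) (xs ! j) \<le> enat (2 * (length ts - 1))"
    if "i < length xs" "j < length xs" "f i = f j" for i j
  proof -
    let ?c = "ts ! f i" and ?r = "length ts - Suc (f i)"
    have "gdist V E (xs ! i) (xs ! j) \<le> gdist V E (xs ! i) ?c + gdist V E (xs ! j) ?c"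
      using gdist_triangle[OF assms(1)] gdist_commute[OF assms(1)] by metis
    also have "\<dots> \<le> enat ?r + enat ?r"
      using f[OF that(1)] f[OF that(2)] that(3) by (intro add_mono) auto
    also have "\<dots> \<le> enat (2 * (length ts - 1))" by simp
    finally show ?thesis .
  qed
  have "inj_on f {..<length xs}"
  proof (rule inj_onI, rule ccontr)
    fix i j assume ij: "i \<in> {..<length xs}" "j \<in> {..<length xs}" "f i = f j" "i \<noteq> j"
    then have "gdist V E (xs ! min i j) (xs ! max i j) \<le> enat (2 * (length ts - 1))"
      using same_ball_close by (cases "i < j") auto
    moreover have "enat (2 * (length ts - 1)) < gdist V E (xs ! min i j) (xs ! max i j)"
      using assms(4) ij unfolding far_apart_def by (simp add: min_def max_def)
    ultimately show False by simp
  qed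
  moreover have "f ` {..<length xs} \<subseteq> {..<length ts}" using f by auto
  ultimately show ?thesis using card_inj_on_le[of f "{..<length xs}" "{..<length ts}"] by simp
qed

lemma greedy_far_apart:
  assumes "simple_graph V E" "n \<le> length ss" "v \<in> V"
    and greedy: "\<And>i u. 1 \<le> i \<Longrightarrow> i < n \<Longrightarrow> u \<in> V \<Longrightarrow>
      gdist_set V E u (set (take i ss)) \<le> gdist_set V E (ss ! i) (set (take i ss))"
    and far: "enat r < gdist_set V E v (set (take n ss))"
  shows "far_apart V E r (take n ss @ [v])"
  unfolding far_apart_def
proof (intro allI impI)
  have prefix_mono: "gdist_set V E v (set (take n ss)) \<le> gdist_set V E v (set (take j ss))"
    if "j \<le> n" for j
    unfolding gdist_set_def using that by (intro INF_superset_mono set_take_subset_set_take) auto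
  have prefix_lower: "gdist_set V E u (set (take j ss)) \<le> gdist V E u (ss ! i)"
    if "i < j" "j \<le> n" for u i j
    unfolding gdist_set_def using that assms(2) nth_mem[of i "take j ss"] by (intro INF_lower) simp
  fix j i assume j: "j < length (take n ss @ [v])" and "i < j"
  show "enat r < gdist V E ((take n ss @ [v]) ! i) ((take n ss @ [v]) ! j)"
  proof (cases "j < n")
    case True
    have "enat r < gdist_set V E v (set (take j ss))"
      using far prefix_mono True by (meson less_le_trans less_imp_le)
    also have "\<dots> \<le> gdist_set V E (ss ! j) (set (take j ss))"
      using greedy \<open>i < j\<close> True assms(3) by simp
    also have "\<dots> \<le> gdist V E (ss ! j) (ss ! i)"
      using prefix_lower \<open>i < j\<close> True by simp
    finally show ?thesis
      using True \<open>i < j\<close> assms(2) gdist_commute[OF assms(1)] by (simp add: nth_append)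
  next
    case False
    then have "j = n" using j assms(2) by simp
    have "enat r < gdist V E v (ss ! i)"
      using far prefix_lower \<open>i < j\<close> \<open>j = n\<close> by (meson less_le_trans order_refl)
    then show ?thesis
      using \<open>i < j\<close> \<open>j = n\<close> assms(2) gdist_commute[OF assms(1)] by (simp add: nth_append)
  qed
qed

lemma greedy_prefix_close:
  assumes "simple_graph V E" "burning_seq V E ts" "length ts \<le> length ss" "set ss \<subseteq> V"
    "v \<in> V"
    and "\<And>i u. 1 \<le> i \<Longrightarrow> i < length ts \<Longrightarrow> u \<in> V \<Longrightarrow>
      gdist_set V E u (set (take i ss)) \<le> gdist_set V E (ss ! i) (set (take i ss))"
  shows "\<exists>j<length ts. gdist V E v (ss ! j) \<le> enat (2 * (length ts - 1))"
proof -
  let ?S = "set (take (length ts) ss)"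
  have bound: "gdist_set V E v ?S \<le> enat (2 * (length ts - 1))"
  proof (rule ccontr)
    assume "\<not> ?thesis"
    then have "far_apart V E (2 * (length ts - 1)) (take (length ts) ss @ [v])"
      using assms by (intro greedy_far_apart) auto
    moreover have "set (take (length ts) ss @ [v]) \<subseteq> V"
      using assms(4,5) set_take_subset by fastforce
    ultimately have "length (take (length ts) ss @ [v]) \<le> length ts"
      using far_apart_length_le_burning_seq assms(1,2) by blast
    then show False using assms(3) by simp
  qed
  have "ts \<noteq> []"
    using assms(2,5) burning_seq_Nil_iff[of V E] by (metis empty_iff)
  then have "?S \<noteq> {}" using assms(3) by auto
  then obtain w where "w \<in> ?S" and "gdist_set V E v ?S = gdist V E v w"
    using gdist_set_attained[of ?S] by blast
  moreover from \<open>w \<in> ?S\<close> obtain j where "j < length ts" "ss ! j = w"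
    by (auto simp: in_set_conv_nth)
  ultimately show ?thesis using bound by auto
qed

theorem theorem1:
  fixes V :: "'a set" and E :: "'a \<Rightarrow> 'a \<Rightarrow> bool" and ss :: "'a list"
  assumes "simple_graph V E" and "V \<noteq> {}"
    and "length ss = 3 * burning_number V E - 2"
    and "set ss \<subseteq> V"
    and "\<And>i u. 1 \<le> i \<Longrightarrow> i < burning_number V E \<Longrightarrow> u \<in> V \<Longrightarrow>
           gdist_set V E u (set (take i ss)) \<le> gdist_set V E (ss ! i) (set (take i ss))"
  shows "burning_seq V E ss \<and>
         real (length ss) \<le> (3 - 2 / real (burning_number V E)) * real (burning_number V E)"
proof -
  define b where "b = burning_number V E"
  have "finite V" using assms(1) unfolding simple_graph_def by blast
  obtain ts where ts: "length ts = b" "burning_seq V E ts"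
    using burning_number_attained[OF \<open>finite V\<close>, of E] unfolding b_def by blast
  have "ts \<noteq> []" using ts(2) assms(2) burning_seq_Nil_iff by metis
  then have "b \<noteq> 0" using ts(1) by auto
  have len: "length ss = b + 2 * (b - 1)" using assms(3) \<open>b \<noteq> 0\<close> unfolding b_def by simp
  have greedy: "\<And>i u. 1 \<le> i \<Longrightarrow> i < length ts \<Longrightarrow> u \<in> V \<Longrightarrow>
      gdist_set V E u (set (take i ss)) \<le> gdist_set V E (ss ! i) (set (take i ss))"
    unfolding ts(1) b_def by (rule assms(5))
  have "burning_seq V E ss"
  proof (rule burning_seq_if_prefix_close[OF assms(4)])
    show "b \<le> length ss" using len by simp
    show "\<exists>j<b. gdist V E v (ss ! j) \<le> enat (length ss - b)" if "v \<in> V" for v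
      using greedy_prefix_close[OF assms(1) ts(2) _ assms(4) that greedy] ts(1) len by simp
  qed
  moreover have "real (length ss) = (3 - 2 / real b) * real b"
    using len \<open>b \<noteq> 0\<close> by (simp add: field_simps)
  ultimately show ?thesis unfolding b_def by simp
qed

end
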